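(* If a normal mode transformation exists, then $\bm{\Omega}$ is positive definite.
   Context: Fix an integer $N\ge 1$, real numbers $v$ with $|v|<1$, $L>0$, $L_{\star}\ge 0$, an integer $M\ge 1$ and real coefficients $c_{1}=1,c_{2},\dots,c_{M}$. Let $F(k)=\sum_{i=1}^{M}(-1)^{i-1}c_{i}L_{\star}^{2i-2}k^{2i-1}$ and $k_{n}=n\pi/L$, and assume $F(k_{n})^{2}\neq v^{2}k_{n}^{2}$ for $n=1,\dots,N$. Put $u_{n}=\sqrt{|F(k_{n})^{2}-v^{2}k_{n}^{2}|}/k_{n}>0$, and $\varepsilon_{n}=1$ if $F(k_{n})^{2}-v^{2}k_{n}^{2}>0$, $\varepsilon_{n}=0$ otherwise. Define $N\times N$ matrices $\bm\sigma,\bm\rho,\bm\xi$ by $\sigma_{nn}=0$, $\sigma_{nm}=\dfrac{2iv\sqrt{nm}\,[1-(-1)^{n+m}]}{\pi\sqrt{u_{n}u_{m}}\,(m^{2}-n^{2})}$ for $n\neq m$, $\bm\rho=\mathrm{diag}(n u_{n}\varepsilon_{n})$, $\bm\xi=\mathrm{diag}(-n u_{n}(1-\varepsilon_{n}))$. With $\mathbf{I}$ the $N\times N$ identity, define the $2N\times 2N$ matrices $\bm{\Sigma}=\begin{pmatrix}\mathbf{I}&\mathbf{0}\\ \mathbf{0}&-\mathbf{I}\end{pmatrix}$, $\bm{\Gamma}=\begin{pmatrix}\mathbf{0}&\mathbf{I}\\ \mathbf{I}&\mathbf{0}\end{pmatrix}$, $\mathbf{R}=\bm{\Sigma}-\begin{pmatrix}\bm\sigma&\bm\sigma\\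 \bm\sigma&\bm\sigma\end{pmatrix}$, $\bm{\Omega}=\begin{pmatrix}\bm\rho&\bm\xi\\ \bm\xi&\bm\rho\end{pmatrix}$. Standing assumption: $\mathbf{R}$ is invertible. Let $\mathbf{D}=\mathbf{R}^{-1}\bm{\Omega}$. Here ${}^{*}$ denotes entrywise complex conjugation and ${}^{\mathrm{H}}$ the conjugate transpose. A normal mode transformation is a $2N\times2N$ matrix $\mathbf{T}$ such that (i) $\mathbf{T}^{\mathrm{H}}\mathbf{R}\mathbf{T}=\bm{\Sigma}$; (ii) $\mathbf{T}=\bm{\Gamma}\mathbf{T}^{*}\bm{\Gamma}$; (iii) $\mathbf{T}^{-1}\mathbf{D}\mathbf{T}=\mathrm{diag}(\mu_{1},\dots,\mu_{N},-\mu_{1},\dots,-\mu_{N})$ for some real numbers $\mu_{n}>0$, where $\mathbf{T}^{-1}=\bm{\Sigma}\mathbf{T}^{\mathrm{H}}\mathbf{R}$. *)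

theory Defs
  imports "HOL-Analysis.Analysis" "Jordan_Normal_Form.Gauss_Jordan_Elimination"
begin

text \<open>Conventions: the paper's index n in 1..N corresponds to the 0-based matrix index n-1.
  All matrices are complex Jordan_Normal_Form matrices.\<close>

definition Fpoly :: "nat \<Rightarrow> (nat \<Rightarrow> real) \<Rightarrow> real \<Rightarrow> real \<Rightarrow> real" where
  "Fpoly M c Ls k = (\<Sum>i=1..M. (-1)^(i-1) * c i * Ls^(2*i-2) * k^(2*i-1))"

definition kn :: "real \<Rightarrow> nat \<Rightarrow> real" where
  "kn L n = real n * pi / L"

definition disc :: "nat \<Rightarrow> (nat \<Rightarrow> real) \<Rightarrow> real \<Rightarrow> real \<Rightarrow> real \<Rightarrow> nat \<Rightarrow> real" where
  "disc M c Ls v L n = (Fpoly M c Ls (kn L n))^2 - v^2 * (kn L n)^2"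

definition un :: "nat \<Rightarrow> (nat \<Rightarrow> real) \<Rightarrow> real \<Rightarrow> real \<Rightarrow> real \<Rightarrow> nat \<Rightarrow> real" where
  "un M c Ls v L n = sqrt \<bar>disc M c Ls v L n\<bar> / kn L n"

definition epsn :: "nat \<Rightarrow> (nat \<Rightarrow> real) \<Rightarrow> real \<Rightarrow> real \<Rightarrow> real \<Rightarrow> nat \<Rightarrow> real" where
  "epsn M c Ls v L n = (if disc M c Ls v L n > 0 then 1 else 0)"

definition sigma_mat :: "nat \<Rightarrow> nat \<Rightarrow> (nat \<Rightarrow> real) \<Rightarrow> real \<Rightarrow> real \<Rightarrow> real \<Rightarrow> complex mat" where
  "sigma_mat N M c Ls v L = mat N N (\<lambda>(i,j).
     if i = j then 0 else
       (let n = i + 1; m = j + 1 in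
        2 * \<i> * complex_of_real v * complex_of_real (sqrt (real (n*m))) * complex_of_real (1 - (-1)^(n+m))
        / complex_of_real (pi * sqrt (un M c Ls v L n * un M c Ls v L m) * (real m ^ 2 - real n ^ 2))))"

definition rho_mat :: "nat \<Rightarrow> nat \<Rightarrow> (nat \<Rightarrow> real) \<Rightarrow> real \<Rightarrow> real \<Rightarrow> real \<Rightarrow> complex mat" where
  "rho_mat N M c Ls v L = mat N N (\<lambda>(i,j).
     if i = j then complex_of_real (real (i+1) * un M c Ls v L (i+1) * epsn M c Ls v L (i+1)) else 0)"

definition xi_mat :: "nat \<Rightarrow> nat \<Rightarrow> (nat \<Rightarrow> real) \<Rightarrow> real \<Rightarrow> real \<Rightarrow> real \<Rightarrow> complex mat" where
  "xi_mat N M c Ls v L = mat N N (\<lambda>(i,j).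
     if i = j then complex_of_real (- real (i+1) * un M c Ls v L (i+1) * (1 - epsn M c Ls v L (i+1))) else 0)"

definition Sigma_mat :: "nat \<Rightarrow> complex mat" where
  "Sigma_mat N = four_block_mat (1\<^sub>m N) (0\<^sub>m N N) (0\<^sub>m N N) (- 1\<^sub>m N)"

definition Gamma_mat :: "nat \<Rightarrow> complex mat" where
  "Gamma_mat N = four_block_mat (0\<^sub>m N N) (1\<^sub>m N) (1\<^sub>m N) (0\<^sub>m N N)"

definition R_mat :: "nat \<Rightarrow> nat \<Rightarrow> (nat \<Rightarrow> real) \<Rightarrow> real \<Rightarrow> real \<Rightarrow> real \<Rightarrow> complex mat" where
  "R_mat N M c Ls v L = Sigma_mat N -
     (let s = sigma_mat N M c Ls v L in four_block_mat s s s s)"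

definition Omega_mat :: "nat \<Rightarrow> nat \<Rightarrow> (nat \<Rightarrow> real) \<Rightarrow> real \<Rightarrow> real \<Rightarrow> real \<Rightarrow> complex mat" where
  "Omega_mat N M c Ls v L =
     four_block_mat (rho_mat N M c Ls v L) (xi_mat N M c Ls v L) (xi_mat N M c Ls v L) (rho_mat N M c Ls v L)"

text \<open>D = R^{-1} Omega (R is assumed invertible, so the inverse exists).\<close>
definition D_mat :: "nat \<Rightarrow> nat \<Rightarrow> (nat \<Rightarrow> real) \<Rightarrow> real \<Rightarrow> real \<Rightarrow> real \<Rightarrow> complex mat" where
  "D_mat N M c Ls v L = the (mat_inverse (R_mat N M c Ls v L)) * Omega_mat N M c Ls v L"

definition mat_conj :: "complex mat \<Rightarrow> complex mat" where
  "mat_conj A = map_mat cnj A"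

definition mat_H :: "complex mat \<Rightarrow> complex mat" where
  "mat_H A = transpose_mat (map_mat cnj A)"

definition normal_mode_transformation ::
  "nat \<Rightarrow> nat \<Rightarrow> (nat \<Rightarrow> real) \<Rightarrow> real \<Rightarrow> real \<Rightarrow> real \<Rightarrow> complex mat \<Rightarrow> bool" where
  "normal_mode_transformation N M c Ls v L T \<longleftrightarrow>
     T \<in> carrier_mat (2*N) (2*N) \<and>
     mat_H T * R_mat N M c Ls v L * T = Sigma_mat N \<and>
     T = Gamma_mat N * mat_conj T * Gamma_mat N \<and>
     (\<exists>\<mu> :: nat \<Rightarrow> real. (\<forall>n<N. \<mu> n > 0) \<and>
        (Sigma_mat N * mat_H T * R_mat N M c Ls v L) * D_mat N M c Ls v L * T
          = mat_diag (2*N) (\<lambda>j. if j < N then complex_of_real (\<mu> j) else - complex_of_real (\<mu> (j - N))))"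

definition pos_def_mat :: "complex mat \<Rightarrow> bool" where
  "pos_def_mat A \<longleftrightarrow> dim_row A = dim_col A \<and> mat_H A = A \<and>
     (\<forall>x \<in> carrier_vec (dim_row A). x \<noteq> 0\<^sub>v (dim_row A) \<longrightarrow>
        (let q = map_vec cnj x \<bullet> (A *\<^sub>v x) in Im q = 0 \<and> Re q > 0))"

end

theory Submission
  imports Defs "Jordan_Normal_Form.Determinant"
begin

text \<open>Condition (i) says that \<open>\<Sigma> T\<^sup>H R\<close> is a left inverse of \<open>T\<close>, so \<open>T\<close> is invertible.
  Since \<open>R D = \<Omega>\<close>, condition (iii) becomes \<open>\<Sigma> T\<^sup>H \<Omega> T = diag(\<mu>, -\<mu>)\<close>, i.e. the congruence
  \<open>T\<^sup>H \<Omega> T = diag(\<mu>, \<mu>)\<close> is a positive diagonal matrix. Positive definiteness is invariant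
  under congruence by an invertible matrix, and \<open>\<Omega>\<close> is Hermitian.\<close>

lemma carrier_mat_H [simp]: "A \<in> carrier_mat n m \<Longrightarrow> mat_H A \<in> carrier_mat m n"
  unfolding mat_H_def by auto

lemma map_vec_cnj_mult_mat_vec:
  assumes "A \<in> carrier_mat n m" and "x \<in> carrier_vec m"
  shows "map_vec cnj (A *\<^sub>v x) = transpose_mat (mat_H A) *\<^sub>v map_vec cnj x"
  using assms by (intro eq_vecI) (auto simp: mat_H_def scalar_prod_def)

lemma quadratic_form_congruence:
  assumes T: "T \<in> carrier_mat n n" and A: "A \<in> carrier_mat n n" and y: "y \<in> carrier_vec n"
  shows "map_vec cnj (T *\<^sub>v y) \<bullet> (A *\<^sub>v (T *\<^sub>v y)) = map_vec cnj y \<bullet> ((mat_H T * A * T) *\<^sub>v y)"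
proof -
  have "map_vec cnj (T *\<^sub>v y) \<bullet> (A *\<^sub>v (T *\<^sub>v y))
      = map_vec cnj y \<bullet> (mat_H T *\<^sub>v (A *\<^sub>v (T *\<^sub>v y)))"
    using assms by (simp add: map_vec_cnj_mult_mat_vec transpose_vec_mult_scalar[of "mat_H T" n n])
  also have "\<dots> = map_vec cnj y \<bullet> ((mat_H T * A * T) *\<^sub>v y)"
    using assms by (simp add: assoc_mult_mat_vec[of _ n n _ n] assoc_mult_mat[of _ n n _ n _ n])
  finally show ?thesis .
qed

lemma quadratic_form_mat_diag:
  assumes "y \<in> carrier_vec n"
  shows "map_vec cnj y \<bullet> (mat_diag n (\<lambda>j. complex_of_real (p j)) *\<^sub>v y)
    = complex_of_real (\<Sum>j<n. p j * (cmod (y $ j))\<^sup>2)"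
proof -
  have diag: "mat_diag n (\<lambda>j. complex_of_real (p j)) *\<^sub>v y
      = vec n (\<lambda>j. complex_of_real (p j) * y $ j)"
    using assms by (intro eq_vecI) (auto simp: mat_diag_def scalar_prod_def mult_delta_left sum.delta)
  have entry: "cnj (y $ j) * (complex_of_real (p j) * y $ j)
      = complex_of_real (p j * (cmod (y $ j))\<^sup>2)" for j
    unfolding of_real_mult complex_norm_square by (simp add: mult_ac)
  have "map_vec cnj y \<bullet> (mat_diag n (\<lambda>j. complex_of_real (p j)) *\<^sub>v y)
      = (\<Sum>j<n. cnj (y $ j) * (complex_of_real (p j) * y $ j))"
    using assms by (simp add: diag scalar_prod_def atLeast0LessThan)
  also have "\<dots> = (\<Sum>j<n. complex_of_real (p j * (cmod (y $ j))\<^sup>2))"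
    by (intro sum.cong refl entry)
  finally show ?thesis by simp
qed

lemma pos_def_mat_diag:
  assumes pos: "\<And>j. j < n \<Longrightarrow> p j > 0"
  shows "pos_def_mat (mat_diag n (\<lambda>j. complex_of_real (p j)))"
  unfolding pos_def_mat_def
proof (intro conjI ballI impI)
  show "mat_H (mat_diag n (\<lambda>j. complex_of_real (p j)))
    = mat_diag n (\<lambda>j. complex_of_real (p j))"
    unfolding mat_H_def mat_diag_def by (rule eq_matI) auto
  fix y :: "complex vec"
  assume "y \<in> carrier_vec (dim_row (mat_diag n (\<lambda>j. complex_of_real (p j))))"
    and "y \<noteq> 0\<^sub>v (dim_row (mat_diag n (\<lambda>j. complex_of_real (p j))))"
  then have y: "y \<in> carrier_vec n" and "y \<noteq> 0\<^sub>v n"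
    by (auto simp: mat_diag_def)
  then obtain k where k: "k < n" "y $ k \<noteq> 0"
    by (metis eq_vecI carrier_vecD index_zero_vec)
  have "(\<Sum>j<n. p j * (cmod (y $ j))\<^sup>2) > 0"
    by (rule sum_pos2[of _ k]) (use k pos in \<open>auto simp: less_imp_le\<close>)
  then show "let q = map_vec cnj y \<bullet> (mat_diag n (\<lambda>j. complex_of_real (p j)) *\<^sub>v y)
    in Im q = 0 \<and> Re q > 0"
    by (simp add: quadratic_form_mat_diag[OF y])
qed (simp add: mat_diag_def)

lemma pos_def_mat_congruence:
  assumes A: "A \<in> carrier_mat n n" and herm: "mat_H A = A"
    and T: "T \<in> carrier_mat n n" and S: "S \<in> carrier_mat n n" and ST: "S * T = 1\<^sub>m n"
    and pd: "pos_def_mat (mat_H T * A * T)"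
  shows "pos_def_mat A"
  unfolding pos_def_mat_def
proof (intro conjI ballI impI)
  fix x :: "complex vec"
  assume "x \<in> carrier_vec (dim_row A)" and "x \<noteq> 0\<^sub>v (dim_row A)"
  then have x: "x \<in> carrier_vec n" and x0: "x \<noteq> 0\<^sub>v n"
    using A by auto
  define y where "y = S *\<^sub>v x"
  have y: "y \<in> carrier_vec n"
    unfolding y_def using S x by simp
  have x_eq: "x = T *\<^sub>v y"
    using mat_mult_left_right_inverse[OF S T ST] S T x
    by (simp add: y_def flip: assoc_mult_mat_vec)
  have "y \<noteq> 0\<^sub>v n"
    using x0 T by (auto simp: x_eq)
  then show "let q = map_vec cnj x \<bullet> (A *\<^sub>v x) in Im q = 0 \<and> Re q > 0"
    using pd T A y unfolding pos_def_mat_def x_eq quadratic_form_congruence[OF T A y] by auto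
qed (use A herm in auto)

lemma invertible_mat_right_inverse:
  fixes A :: "'a :: field mat"
  assumes A: "A \<in> carrier_mat n n" and inv: "invertible_mat A"
  shows "A * the (mat_inverse A) = 1\<^sub>m n" and "the (mat_inverse A) \<in> carrier_mat n n"
proof -
  obtain B where "A * B = 1\<^sub>m n" "B * A = 1\<^sub>m n" "B \<in> carrier_mat n n"
    using inv A unfolding invertible_mat_def inverts_mat_def
    by (metis carrier_matD carrier_matI index_mult_mat(2,3) index_one_mat(2,3))
  then have "A \<in> Units (ring_mat TYPE('a) n ())"
    using A unfolding Units_def ring_mat_def by auto
  then obtain B' where "mat_inverse A = Some B'"
    using mat_inverse(1)[OF A, where b = "()"] by (cases "mat_inverse A") auto
  then show "A * the (mat_inverse A) = 1\<^sub>m n" and "the (mat_inverse A) \<in> carrier_mat n n"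
    using mat_inverse(2)[OF A] by auto
qed

lemma Sigma_mat_eq_mat_diag: "Sigma_mat N = mat_diag (2*N) (\<lambda>j. if j < N then 1 else -1)"
  unfolding Sigma_mat_def mat_diag_def by (rule eq_matI) auto

lemma Sigma_mat_carrier [simp]: "Sigma_mat N \<in> carrier_mat (2*N) (2*N)"
  by (simp add: Sigma_mat_eq_mat_diag)

lemma Sigma_mat_mult_Sigma_mat: "Sigma_mat N * Sigma_mat N = 1\<^sub>m (2*N)"
proof -
  have "Sigma_mat N * Sigma_mat N = mat_diag (2*N) (\<lambda>j. 1)"
    unfolding Sigma_mat_eq_mat_diag mat_diag_diag by (rule arg_cong[where f = "mat_diag _"]) auto
  then show ?thesis by simp
qed

lemma R_mat_carrier [simp]: "R_mat N M c Ls v L \<in> carrier_mat (2*N) (2*N)"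
  unfolding R_mat_def Let_def sigma_mat_def by (auto simp: mult_2)

lemma Omega_mat_carrier [simp]: "Omega_mat N M c Ls v L \<in> carrier_mat (2*N) (2*N)"
  unfolding Omega_mat_def rho_mat_def xi_mat_def by (auto simp: mult_2)

lemma mat_H_Omega_mat: "mat_H (Omega_mat N M c Ls v L) = Omega_mat N M c Ls v L"
  unfolding Omega_mat_def rho_mat_def xi_mat_def mat_H_def
  by (rule eq_matI) (auto simp: mult_2)

lemma normal_mode_transformation_left_inverse:
  assumes "normal_mode_transformation N M c Ls v L T"
  shows "(Sigma_mat N * mat_H T * R_mat N M c Ls v L) * T = 1\<^sub>m (2*N)"
proof -
  have T: "T \<in> carrier_mat (2*N) (2*N)"
    and TRT: "mat_H T * R_mat N M c Ls v L * T = Sigma_mat N"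
    using assms unfolding normal_mode_transformation_def by auto
  have "(Sigma_mat N * mat_H T * R_mat N M c Ls v L) * T
      = Sigma_mat N * (mat_H T * R_mat N M c Ls v L * T)"
    using T by (simp add: assoc_mult_mat[of _ "2*N" "2*N" _ "2*N" _ "2*N"]
        mult_carrier_mat[of _ "2*N" "2*N" _ "2*N"])
  then show ?thesis
    by (simp add: TRT Sigma_mat_mult_Sigma_mat)
qed

lemma normal_mode_transformation_diagonalizes_Omega:
  assumes "invertible_mat (R_mat N M c Ls v L)" and "normal_mode_transformation N M c Ls v L T"
  obtains \<mu> :: "nat \<Rightarrow> real" where "\<And>j. j < N \<Longrightarrow> \<mu> j > 0"
    and "mat_H T * Omega_mat N M c Ls v L * T = mat_diag (2*N) (\<lambda>j. complex_of_real (\<mu> (j mod N)))"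
proof -
  define n R \<Omega> \<Sigma> where "n = 2*N" and "R = R_mat N M c Ls v L" and "\<Omega> = Omega_mat N M c Ls v L"
    and "\<Sigma> = Sigma_mat N"
  have R: "R \<in> carrier_mat n n" and \<Omega>: "\<Omega> \<in> carrier_mat n n" and \<Sigma>: "\<Sigma> \<in> carrier_mat n n"
    by (simp_all add: n_def R_def \<Omega>_def \<Sigma>_def)
  obtain \<mu> :: "nat \<Rightarrow> real" where \<mu>: "\<forall>j<N. \<mu> j > 0" and T: "T \<in> carrier_mat n n"
    and eigen: "(\<Sigma> * mat_H T * R) * D_mat N M c Ls v L * T
      = mat_diag n (\<lambda>j. if j < N then complex_of_real (\<mu> j) else - complex_of_real (\<mu> (j - N)))"
      (is "_ = ?\<Lambda>")
    using assms(2) unfolding normal_mode_transformation_def n_def R_def \<Sigma>_def by blast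
  have RD: "R * D_mat N M c Ls v L = \<Omega>" and D: "D_mat N M c Ls v L \<in> carrier_mat n n"
    using invertible_mat_right_inverse[OF R] assms(1) R \<Omega>
    by (auto simp: D_mat_def R_def \<Omega>_def simp flip: assoc_mult_mat)
  have HTT: "mat_H T * \<Omega> * T \<in> carrier_mat n n"
    using T \<Omega> by (simp add: mult_carrier_mat[of _ n n _ n])
  have "\<Sigma> * (mat_H T * \<Omega> * T) = (\<Sigma> * mat_H T * R) * D_mat N M c Ls v L * T"
    unfolding RD[symmetric] using \<Sigma> T R D
    by (simp add: assoc_mult_mat[of _ n n _ n _ n] mult_carrier_mat[of _ n n _ n])
  then have \<Sigma>_HTT: "\<Sigma> * (mat_H T * \<Omega> * T) = ?\<Lambda>"
    by (simp add: eigen)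
  have "mat_H T * \<Omega> * T = (\<Sigma> * \<Sigma>) * (mat_H T * \<Omega> * T)"
    using left_mult_one_mat[OF HTT] by (simp add: \<Sigma>_def n_def Sigma_mat_mult_Sigma_mat)
  also have "\<dots> = \<Sigma> * ?\<Lambda>"
    using \<Sigma> HTT by (simp add: \<Sigma>_HTT[symmetric])
  also have "\<dots> = mat_diag n (\<lambda>j. complex_of_real (\<mu> (j mod N)))"
    unfolding \<Sigma>_def Sigma_mat_eq_mat_diag mat_diag_diag n_def
    by (rule eq_matI) (auto simp: mat_diag_def le_mod_geq)
  finally show thesis
    using that \<mu> unfolding \<Omega>_def n_def by blast
qed

theorem lemma5:
  fixes N M :: nat and v L Ls :: real and c :: "nat \<Rightarrow> real"
  assumes "N \<ge> 1" and "\<bar>v\<bar> < 1" and "L > 0" and "Ls \<ge> 0" and "M \<ge> 1" and "c 1 = 1"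
    and "\<And>n. 1 \<le> n \<Longrightarrow> n \<le> N \<Longrightarrow> (Fpoly M c Ls (kn L n))^2 \<noteq> v^2 * (kn L n)^2"
    and "invertible_mat (R_mat N M c Ls v L)"
    and "\<exists>T. normal_mode_transformation N M c Ls v L T"
  shows "pos_def_mat (Omega_mat N M c Ls v L)"
proof -
  obtain T where nmt: "normal_mode_transformation N M c Ls v L T"
    using assms(9) by blast
  then have T: "T \<in> carrier_mat (2*N) (2*N)"
    unfolding normal_mode_transformation_def by simp
  obtain \<mu> :: "nat \<Rightarrow> real" where \<mu>: "\<And>j. j < N \<Longrightarrow> \<mu> j > 0"
    and congruent: "mat_H T * Omega_mat N M c Ls v L * T
      = mat_diag (2*N) (\<lambda>j. complex_of_real (\<mu> (j mod N)))"
    using normal_mode_transformation_diagonalizes_Omega[OF assms(8) nmt] by blast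
  have "pos_def_mat (mat_H T * Omega_mat N M c Ls v L * T)"
    unfolding congruent using assms(1) by (intro pos_def_mat_diag \<mu>) simp
  then show ?thesis
    using T by (intro pos_def_mat_congruence[OF Omega_mat_carrier mat_H_Omega_mat T _
        normal_mode_transformation_left_inverse[OF nmt]])
      (simp_all add: mult_carrier_mat[of _ "2*N" "2*N" _ "2*N"])
qed

end
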